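(* Let $x\in\Sigma$, $\ell\ge1$, $n\ge2$ and $\varepsilon=2^{-h}$ with $h\in\mathbb N$; put $\varepsilon_0=1/2$ and $\theta_{nh}=\frac{(n+h-1)^2-(n+h-1)}{n^2-n}$. Then \begin{align*} N_\ell(x,n,\varepsilon)&=N_{\ell+h-1}(x,n+h-1,\varepsilon_0),\\ \lambda_\ell(x,n,\varepsilon)&=\theta_{nh}\,\lambda_{\ell+h-1}(x,n+h-1,\varepsilon_0),\\ \Lambda_\ell(x,n,\varepsilon)&=\theta_{nh}\,\Lambda_{\ell+h-1}(x,n+h-1,\varepsilon_0),\\ \mathrm{RR}_\ell(x,n,\varepsilon)&=\theta_{nh}\big(\mathrm{RR}_{\ell+h-1}(x,n+h-1,\varepsilon_0)-(h-1)\Lambda_{\ell+h-1}(x,n+h-1,\varepsilon_0)\big). \end{align*}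
   Context: $A=\{0,1\}$, $\Sigma=A^{\mathbb N_0}$ with metric $\rho(y,z)=2^{-\min\{i\ge0:\,y_i\ne z_i\}}$ for $y\ne z$, shift $\sigma$. Recurrence plot $R(x,n,\varepsilon)$: $n\times n$ matrix ($0\le i,j<n$) with entry $1$ iff $\rho(\sigma^ix,\sigma^jx)\le\varepsilon$. A line of length $\ell$: $(i,j,\ell)$ with $0\le i,j\le n-\ell$, $i\ne j$, entries $(i+k,j+k)=1$ for $0\le k<\ell$, entry $(i-1,j-1)=0$ if $\min\{i,j\}>0$, entry $(i+\ell,j+\ell)=0$ if $\max\{i,j\}<n-\ell$. $N_\ell(x,n,\varepsilon)$ = number of lines of length exactly $\ell$ (boundary ones included), $\lambda_\ell=N_\ell/(n^2-n)$, $\Lambda_\ell=\sum_{l\ge\ell}\lambda_l$, $\mathrm{RR}_\ell=\sum_{l\ge\ell}l\lambda_l$. *)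

theory Defs
  imports Complex_Main
begin

text \<open>Sequences over the alphabet A = {0,1}: functions nat => nat with values in {0,1}.\<close>

definition shift :: "nat \<Rightarrow> (nat \<Rightarrow> nat) \<Rightarrow> (nat \<Rightarrow> nat)" where
  "shift i x = (\<lambda>k. x (k + i))"

definition rho :: "(nat \<Rightarrow> nat) \<Rightarrow> (nat \<Rightarrow> nat) \<Rightarrow> real" where
  "rho y z = (if y = z then 0 else (1/2) ^ (LEAST i. y i \<noteq> z i))"

definition RP :: "(nat \<Rightarrow> nat) \<Rightarrow> real \<Rightarrow> nat \<Rightarrow> nat \<Rightarrow> bool" where
  "RP x eps i j = (rho (shift i x) (shift j x) \<le> eps)"

definition is_line :: "(nat \<Rightarrow> nat) \<Rightarrow> nat \<Rightarrow> real \<Rightarrow> nat \<Rightarrow> nat \<Rightarrow> nat \<Rightarrow> bool" where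
  "is_line x n eps i j l \<longleftrightarrow>
     i + l \<le> n \<and> j + l \<le> n \<and> i \<noteq> j \<and>
     (\<forall>k<l. RP x eps (i + k) (j + k)) \<and>
     (min i j > 0 \<longrightarrow> \<not> RP x eps (i - 1) (j - 1)) \<and>
     (max i j + l < n \<longrightarrow> \<not> RP x eps (i + l) (j + l))"

definition N_lines :: "nat \<Rightarrow> (nat \<Rightarrow> nat) \<Rightarrow> nat \<Rightarrow> real \<Rightarrow> nat" where
  "N_lines l x n eps = card {(i, j). is_line x n eps i j l}"

definition lam :: "nat \<Rightarrow> (nat \<Rightarrow> nat) \<Rightarrow> nat \<Rightarrow> real \<Rightarrow> real" where
  "lam l x n eps = real (N_lines l x n eps) / (real n ^ 2 - real n)"

text \<open>Lines have length at most n, so the sum over l >= ell is the finite sum over ell..n.\<close>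
definition Lam :: "nat \<Rightarrow> (nat \<Rightarrow> nat) \<Rightarrow> nat \<Rightarrow> real \<Rightarrow> real" where
  "Lam l x n eps = (\<Sum>m\<in>{l..n}. lam m x n eps)"

definition RR :: "nat \<Rightarrow> (nat \<Rightarrow> nat) \<Rightarrow> nat \<Rightarrow> real \<Rightarrow> real" where
  "RR l x n eps = (\<Sum>m\<in>{l..n}. real m * lam m x n eps)"

end

theory Submission
  imports Defs
begin

text \<open>At scale eps = 2^-h an entry (i, j) of the recurrence plot records agreement of the
  length-h words starting at i and j, while at eps0 = 1/2 it records agreement of single
  symbols. So a run of l diagonal ones at scale eps starting at (i, j) is a run of l + h - 1
  diagonal ones at scale eps0, and the zeros delimiting the two runs correspond as well. Hence
  lines of length l in the n x n plot at scale eps are exactly the lines of length l + h - 1 in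
  the (n + h - 1) x (n + h - 1) plot at scale eps0. The identities for lam, Lam and RR follow by
  renormalising with the numbers of off-diagonal entries and shifting the summation index by
  h - 1, which produces the correction term in RR.\<close>

lemma rho_le_half_power_iff:
  "rho y z \<le> (1/2::real) ^ h \<longleftrightarrow> (\<forall>k<h. y k = z k)"
proof (cases "y = z")
  case False
  then obtain m where m: "y m \<noteq> z m" by blast
  let ?L = "LEAST i. y i \<noteq> z i"
  have "h \<le> ?L \<longleftrightarrow> (\<forall>k<h. y k = z k)"
  proof
    show "\<forall>k<h. y k = z k" if "h \<le> ?L"
    proof (intro allI impI)
      fix k assume "k < h"
      with that have "k < ?L" by linarith
      then show "y k = z k" by (rule not_less_Least[THEN notnotD])
    qed
    show "h \<le> ?L" if "\<forall>k<h. y k = z k"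
      using LeastI[of "\<lambda>i. y i \<noteq> z i", OF m] that not_le by blast
  qed
  moreover have "rho y z = (1/2) ^ ?L" using False by (simp add: rho_def)
  ultimately show ?thesis by simp
qed (simp add: rho_def)

lemma RP_half_power_iff:
  "RP x ((1/2::real) ^ h) i j \<longleftrightarrow> (\<forall>k<h. x (i + k) = x (j + k))"
  by (simp add: RP_def rho_le_half_power_iff shift_def add.commute)

lemma RP_half_iff: "RP x (1/2::real) i j \<longleftrightarrow> x i = x j"
  using RP_half_power_iff[of x 1 i j] by simp

lemma all_windows_iff_all_below:
  assumes "l \<ge> 1" "h \<ge> 1"
  shows "(\<forall>k<l. \<forall>t<h. P (k + t :: nat)) \<longleftrightarrow> (\<forall>k<l + h - 1. P k)"
proof
  assume windows: "\<forall>k<l. \<forall>t<h. P (k + t)"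
  show "\<forall>k<l + h - 1. P k"
  proof (intro allI impI)
    fix k assume "k < l + h - 1"
    show "P k"
    proof (cases "k < l")
      case True
      then show ?thesis using windows[rule_format, of k 0] assms(2) by simp
    next
      case False
      then have "P (l - 1 + (k - (l - 1)))"
        using windows[rule_format, of "l - 1" "k - (l - 1)"] \<open>k < l + h - 1\<close> assms by simp
      then show ?thesis using False by simp
    qed
  qed
qed auto

lemma all_below_iff_zero:
  fixes h :: nat
  assumes "\<forall>t. 0 < t \<and> t < h \<longrightarrow> P t" "h \<ge> 1"
  shows "(\<forall>t<h. P t) \<longleftrightarrow> P 0"
proof
  show "\<forall>t<h. P t" if "P 0"
  proof (intro allI impI)
    fix t assume "t < h"
    then show "P t" using that assms(1) by (cases "t = 0") auto
  qed
qed (use assms(2) in simp)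

lemma all_below_iff_last:
  fixes h :: nat
  assumes "\<forall>t<h - 1. P t" "h \<ge> 1"
  shows "(\<forall>t<h. P t) \<longleftrightarrow> P (h - 1)"
proof -
  have "t < h \<longleftrightarrow> t < h - 1 \<or> t = h - 1" for t using assms(2) by linarith
  then show ?thesis using assms(1) by blast
qed

lemma is_line_half_power_iff:
  assumes "l \<ge> 1" "h \<ge> 1"
  shows "is_line x n ((1/2::real) ^ h) i j l \<longleftrightarrow> is_line x (n + h - 1) (1/2) i j (l + h - 1)"
proof -
  let ?P = "\<lambda>k. x (i + k) = x (j + k)"
  have run: "(\<forall>k<l. RP x ((1/2) ^ h) (i + k) (j + k)) \<longleftrightarrow> (\<forall>k<l + h - 1. ?P k)"
    using all_windows_iff_all_below[OF assms, of ?P] by (simp add: RP_half_power_iff add.assoc)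
  have before: "RP x ((1/2) ^ h) (i - 1) (j - 1) \<longleftrightarrow> RP x (1/2) (i - 1) (j - 1)"
    if "min i j > 0" and agree: "\<forall>k<l + h - 1. ?P k"
  proof -
    have "x (i - 1 + t) = x (j - 1 + t)" if "0 < t" "t < h" for t
    proof -
      have "t - 1 < l + h - 1" using \<open>t < h\<close> assms by linarith
      moreover have "i - 1 + t = i + (t - 1)" "j - 1 + t = j + (t - 1)"
        using \<open>min i j > 0\<close> \<open>0 < t\<close> by auto
      ultimately show ?thesis using agree by simp
    qed
    then show ?thesis
      using all_below_iff_zero[of h "\<lambda>k. x (i - 1 + k) = x (j - 1 + k)"] assms(2)
      by (simp add: RP_half_power_iff RP_half_iff)
  qed
  have after: "RP x ((1/2) ^ h) (i + l) (j + l) \<longleftrightarrow> RP x (1/2) (i + (l + h - 1)) (j + (l + h - 1))"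
    if agree: "\<forall>k<l + h - 1. ?P k"
  proof -
    have "x (i + l + t) = x (j + l + t)" if "t < h - 1" for t
      using agree[rule_format, of "l + t"] that by (simp add: add.assoc)
    moreover have "i + (l + h - 1) = i + l + (h - 1)" "j + (l + h - 1) = j + l + (h - 1)"
      using assms by auto
    ultimately show ?thesis
      using all_below_iff_last[of h "\<lambda>k. x (i + l + k) = x (j + l + k)"] assms(2)
      by (simp add: RP_half_power_iff RP_half_iff)
  qed
  have bounds: "max i j + l < n \<longleftrightarrow> max i j + (l + h - 1) < n + h - 1"
    "i + l \<le> n \<longleftrightarrow> i + (l + h - 1) \<le> n + h - 1" "j + l \<le> n \<longleftrightarrow> j + (l + h - 1) \<le> n + h - 1"
    using assms by auto
  show ?thesis
    unfolding is_line_def run bounds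
    using before after by (auto simp: RP_half_iff simp del: max_less_iff_conj)
qed

lemma N_lines_half_power:
  assumes "l \<ge> 1" "h \<ge> 1"
  shows "N_lines l x n ((1/2) ^ h) = N_lines (l + h - 1) x (n + h - 1) (1/2)"
  unfolding N_lines_def is_line_half_power_iff[OF assms] ..

lemma power2_minus_self_pos:
  assumes "n \<ge> 2"
  shows "real n ^ 2 - real n > 0"
proof -
  have "real n ^ 2 - real n = real n * (real n - 1)" by (simp add: power2_eq_square algebra_simps)
  then show ?thesis using assms by simp
qed

lemma lam_half_power:
  assumes "l \<ge> 1" "n \<ge> 2" "h \<ge> 1"
  shows "lam l x n ((1/2) ^ h) = (real (n + h - 1) ^ 2 - real (n + h - 1)) / (real n ^ 2 - real n)
           * lam (l + h - 1) x (n + h - 1) (1/2)"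
proof -
  have "real n ^ 2 - real n > 0" using assms(2) by (rule power2_minus_self_pos)
  moreover have "real (n + h - 1) ^ 2 - real (n + h - 1) > 0"
    by (rule power2_minus_self_pos) (use assms in linarith)
  moreover have "a / b = c / b * (a / c)" if "b > 0" "c > 0" for a b c :: real
    using that by simp
  ultimately show ?thesis
    unfolding lam_def N_lines_half_power[OF assms(1,3)] by blast
qed

lemma Lam_reindex:
  assumes "\<And>m. l \<le> m \<Longrightarrow> m \<le> n \<Longrightarrow> lam m x n e = c * lam (m + d) x' (n + d) e'"
  shows "Lam l x n e = c * Lam (l + d) x' (n + d) e'"
  unfolding Lam_def sum.shift_bounds_cl_nat_ivl sum_distrib_left
  by (rule sum.cong) (auto simp: assms)

lemma RR_reindex:
  assumes "\<And>m. l \<le> m \<Longrightarrow> m \<le> n \<Longrightarrow> lam m x n e = c * lam (m + d) x' (n + d) e'"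
  shows "RR l x n e = c * (RR (l + d) x' (n + d) e' - real d * Lam (l + d) x' (n + d) e')"
proof -
  have "RR l x n e = (\<Sum>m\<in>{l..n}. c * (real (m + d) * lam (m + d) x' (n + d) e'
                                          - real d * lam (m + d) x' (n + d) e'))"
    unfolding RR_def by (rule sum.cong) (auto simp: assms algebra_simps)
  also have "\<dots> = c * (RR (l + d) x' (n + d) e' - real d * Lam (l + d) x' (n + d) e')"
    unfolding RR_def Lam_def sum.shift_bounds_cl_nat_ivl
    by (simp only: sum_subtractf[symmetric] sum_distrib_left)
  finally show ?thesis .
qed

theorem mainTheorem11:
  fixes x :: "nat \<Rightarrow> nat" and l n h :: nat
  assumes "\<forall>k. x k \<in> {0, 1}"
    and "l \<ge> 1" and "n \<ge> 2" and "h \<ge> 1"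
  defines "eps \<equiv> (1/2::real) ^ h"
    and "eps0 \<equiv> (1/2::real)"
    and "theta \<equiv> (real (n + h - 1) ^ 2 - real (n + h - 1)) / (real n ^ 2 - real n)"
  shows "N_lines l x n eps = N_lines (l + h - 1) x (n + h - 1) eps0
    \<and> lam l x n eps = theta * lam (l + h - 1) x (n + h - 1) eps0
    \<and> Lam l x n eps = theta * Lam (l + h - 1) x (n + h - 1) eps0
    \<and> RR l x n eps = theta * (RR (l + h - 1) x (n + h - 1) eps0
                                 - (real h - 1) * Lam (l + h - 1) x (n + h - 1) eps0)"
proof -
  have lam: "lam m x n eps = theta * lam (m + (h - 1)) x (n + (h - 1)) eps0" if "l \<le> m" for m
    using lam_half_power[of m n h x] that assms(2-4) unfolding eps_def eps0_def theta_def by simp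
  have shifted: "l + h - 1 = l + (h - 1)" "n + h - 1 = n + (h - 1)" "real h - 1 = real (h - 1)"
    using assms(4) by auto
  have "Lam l x n eps = theta * Lam (l + (h - 1)) x (n + (h - 1)) eps0"
    by (rule Lam_reindex) (rule lam)
  moreover have "RR l x n eps = theta * (RR (l + (h - 1)) x (n + (h - 1)) eps0
                                   - real (h - 1) * Lam (l + (h - 1)) x (n + (h - 1)) eps0)"
    by (rule RR_reindex) (rule lam)
  ultimately show ?thesis
    using N_lines_half_power[OF assms(2,4), of x n] lam[OF order_refl]
    unfolding eps_def eps0_def shifted by blast
qed

end
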